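(* Let $(\mathcal Q,d)$ be a Hadamard space, $Y$ a $\mathcal Q$-valued random variable, $o\in\mathcal Q$, and $\tau\in\mathcal S_0^+$ with $\mathbb E[\tau'(d(Y,o))]<\infty$. Let $m\in\arg\min_{q\in\mathcal Q}\mathbb E[\tau(d(Y,q))-\tau(d(Y,o))]$ and $x_0:=\inf\{x\in(0,\infty):\tau'^{\oplus}(x)=0\}$ (with $\inf\emptyset=\infty$). If $\mathbb P(d(Y,m)<x_0)>0$, then $m$ is the only $\tau$-Fréchet mean of $Y$. In particular, if $\tau'^{\oplus}(x)>0$ for all $x\in(0,\infty)$, the $\tau$-Fréchet mean is unique.
   Context: A Hadamard space is a complete metric space $(\mathcal Q,d)$ such that for all $y_0,y_1$ there is $m$ with $\frac12 d(y_0,q)^2+\frac12 d(y_1,q)^2-\frac14 d(y_0,y_1)^2\ge d(q,m)^2$ for all $q$. $\mathcal S_0^+$ is the set of nondecreasing convex $\tau:[0,\infty)\to\mathbb R$, differentiable on $(0,\infty)$ with concave derivative $\tau'$ (with $\tau'(0):=\lim_{x\searrow0}\tau'(x)$), $\tau(0)=0$ and $\tau'(x)>0$ for $x>0$; $\tau'^{\oplus}$ is the right derivative of $\tau'$. A $\tau$-Fréchet mean of $Y$ is an element of $\arg\min_{q}\mathbb E[\tau(d(Y,q))-\tau(d(Y,o))]$. *)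

theory Defs
  imports "HOL-Probability.Probability"
begin

definition hadamard_space :: "'a::metric_space set \<Rightarrow> bool" where
  "hadamard_space Q \<longleftrightarrow> Topological_Spaces.complete Q \<and>
     (\<forall>y0\<in>Q. \<forall>y1\<in>Q. \<exists>m\<in>Q. \<forall>q\<in>Q.
        (1/2) * (dist y0 q)\<^sup>2 + (1/2) * (dist y1 q)\<^sup>2 - (1/4) * (dist y0 y1)\<^sup>2 \<ge> (dist q m)\<^sup>2)"

definition S0plus :: "(real \<Rightarrow> real) \<Rightarrow> (real \<Rightarrow> real) \<Rightarrow> bool" where
  "S0plus \<tau> \<tau>' \<longleftrightarrow>
     mono_on {0..} \<tau> \<and> convex_on {0..} \<tau> \<and>
     (\<forall>x>0. (\<tau> has_real_derivative \<tau>' x) (at x)) \<and>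
     concave_on {0<..} \<tau>' \<and>
     (\<tau>' \<longlongrightarrow> \<tau>' 0) (at_right 0) \<and>
     \<tau> 0 = 0 \<and> (\<forall>x>0. \<tau>' x > 0)"

definition rderiv :: "(real \<Rightarrow> real) \<Rightarrow> real \<Rightarrow> real" where
  "rderiv f x = Lim (at_right 0) (\<lambda>h. (f (x + h) - f x) / h)"

definition frechet_obj :: "'b measure \<Rightarrow> ('b \<Rightarrow> 'a::metric_space) \<Rightarrow> (real \<Rightarrow> real) \<Rightarrow> 'a \<Rightarrow> 'a \<Rightarrow> real" where
  "frechet_obj M Y \<tau> ob q = (\<integral>\<omega>. \<tau> (dist (Y \<omega>) q) - \<tau> (dist (Y \<omega>) ob) \<partial>M)"

definition tau_frechet_mean :: "'b measure \<Rightarrow> ('b \<Rightarrow> 'a::metric_space) \<Rightarrow> (real \<Rightarrow> real) \<Rightarrow> 'a \<Rightarrow> 'a \<Rightarrow> bool" where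
  "tau_frechet_mean M Y \<tau> ob m \<longleftrightarrow> (\<forall>q. frechet_obj M Y \<tau> ob m \<le> frechet_obj M Y \<tau> ob q)"

end

theory Submission
  imports Defs
begin

text \<open>
  If \<open>m\<close> and \<open>q \<noteq> m\<close> were both \<open>\<tau>\<close>-Fr\'echet means, let \<open>c\<close> be the point given by the
  Hadamard inequality for \<open>m, q\<close>. Then \<open>d(y,c) \<le> (d(y,m) + d(y,q))/2\<close> for every \<open>y\<close>, so by
  monotonicity and convexity of \<open>\<tau>\<close> the integrand \<open>(\<tau>(d(Y,m)) + \<tau>(d(Y,q)))/2 - \<tau>(d(Y,c))\<close> is
  nonnegative, while its expectation is \<open>\<le> 0\<close> by minimality. It is strictly positive whenever
  \<open>d(Y,m) < x\<^sub>0\<close>: for \<open>d(Y,m) = d(Y,q)\<close> the Hadamard inequality gives \<open>d(Y,c) < d(Y,m)\<close>, and otherwise equality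
  in the midpoint convexity inequality would make \<open>\<tau>'\<close> constant on an interval to the right of
  \<open>d(Y,m)\<close>, hence, by concavity and monotonicity, on the whole half-line beyond it, forcing
  \<open>x\<^sub>0 \<le> d(Y,m)\<close>. The integrability of the objective comes from a Lipschitz bound for \<open>\<tau>\<close>
  in terms of \<open>\<tau>'\<close>, which concavity of \<open>\<tau>'\<close> keeps at most linear.
\<close>

definition flat_threshold :: "(real \<Rightarrow> real) \<Rightarrow> ereal" where
  "flat_threshold \<tau>' = Inf (ereal ` {x. x > 0 \<and> rderiv \<tau>' x = 0})"

lemma S0plus_tangent_le:
  assumes S: "S0plus \<tau> \<tau>'" and x: "x > 0" and y: "y \<ge> 0"
  shows "\<tau> x + \<tau>' x * (y - x) \<le> \<tau> y"
proof -
  have convex: "convex_on {0..} \<tau>" and "(\<tau> has_real_derivative \<tau>' x) (at x)"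
    using S x by (auto simp: S0plus_def)
  then have "\<tau>' x * (y - x) \<le> \<tau> y - \<tau> x"
    using x y by (intro convex_on_imp_above_tangent[OF convex]) (auto intro: has_field_derivative_at_within)
  then show ?thesis by simp
qed

lemma S0plus_deriv_mono:
  assumes S: "S0plus \<tau> \<tau>'" and "0 < x" "x \<le> y"
  shows "\<tau>' x \<le> \<tau>' y"
proof (cases "x = y")
  case False
  have "\<tau> x + \<tau>' x * (y - x) \<le> \<tau> y" "\<tau> y + \<tau>' y * (x - y) \<le> \<tau> x"
    using S0plus_tangent_le[OF S] assms by auto
  then have "\<tau>' x * (y - x) \<le> \<tau>' y * (y - x)" by (simp add: algebra_simps)
  then show ?thesis using False assms by (simp add: mult_le_cancel_right)
qed simp

lemma S0plus_deriv_nonneg: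
  assumes S: "S0plus \<tau> \<tau>'" and "x \<ge> 0"
  shows "\<tau>' x \<ge> 0"
proof (cases "x = 0")
  case True
  have "(\<tau>' \<longlongrightarrow> \<tau>' 0) (at_right 0)" and "\<forall>\<^sub>F y in at_right (0::real). \<tau>' y \<ge> 0"
    using S by (auto simp: S0plus_def eventually_at_right_less intro: eventually_mono[OF eventually_at_right_less] less_imp_le)
  then have "\<tau>' 0 \<ge> 0" by (intro tendsto_lowerbound) auto
  then show ?thesis using True by simp
next
  case False
  then show ?thesis using S assms by (auto simp: S0plus_def intro: less_imp_le)
qed

lemma S0plus_strict_mono:
  assumes S: "S0plus \<tau> \<tau>'" and "0 \<le> s" "s < t"
  shows "\<tau> s < \<tau> t"
proof -
  define u where "u = (s + t) / 2"
  have u: "u > 0" "s \<le> u" "u < t" using assms by (auto simp: u_def)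
  have "\<tau> u + \<tau>' u * (t - u) \<le> \<tau> t" using S0plus_tangent_le[OF S u(1), of t] u by auto
  moreover have "\<tau>' u * (t - u) > 0" using S u by (auto simp: S0plus_def)
  moreover have "\<tau> s \<le> \<tau> u" using S u assms by (auto simp: S0plus_def mono_on_def)
  ultimately show ?thesis by linarith
qed

lemma S0plus_midpoint_le:
  assumes S: "S0plus \<tau> \<tau>'" and "0 \<le> a" "0 \<le> b"
  shows "\<tau> ((a + b) / 2) \<le> (\<tau> a + \<tau> b) / 2"
proof -
  have "convex_on {0..} \<tau>" using S by (simp add: S0plus_def)
  then have "\<tau> ((1 - 1/2) *\<^sub>R a + (1/2) *\<^sub>R b) \<le> (1 - 1/2) * \<tau> a + (1/2) * \<tau> b"
    using assms by (intro convex_onD) auto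
  then show ?thesis by (simp add: field_simps)
qed

text \<open>Equality in the midpoint inequality makes \<open>\<tau>\<close> affine on \<open>[a, b]\<close>, since every tangent at a
  point of \<open>(a, b)\<close> lies below the chord.\<close>

lemma S0plus_deriv_const_if_midpoint_eq:
  assumes S: "S0plus \<tau> \<tau>'" and ab: "0 \<le> a" "a < b"
    and eq: "(\<tau> a + \<tau> b) / 2 \<le> \<tau> ((a + b) / 2)"
    and x: "a < x" "x < b"
  shows "\<tau>' x = \<tau>' ((a + b) / 2)"
proof -
  define m where "m = (a + b) / 2"
  define k where "k = \<tau>' m"
  have m: "m > 0" "a < m" "m < b" using ab by (auto simp: m_def)
  have "\<tau> m + k * (a - m) \<le> \<tau> a" "\<tau> m + k * (b - m) \<le> \<tau> b"
    using S0plus_tangent_le[OF S m(1)] ab by (auto simp: k_def)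
  moreover have "k * (a - m) + k * (b - m) = 0" by (simp add: m_def algebra_simps)
  ultimately have ea: "\<tau> a = \<tau> m + k * (a - m)" and eb: "\<tau> b = \<tau> m + k * (b - m)"
    using eq by (auto simp: m_def)
  have x0: "x > 0" using x ab by auto
  have tx: "\<tau> m + k * (x - m) \<le> \<tau> x" using S0plus_tangent_le[OF S m(1), of x] x0 by (simp add: k_def)
  have "\<tau> x + \<tau>' x * (a - x) \<le> \<tau> a" "\<tau> x + \<tau>' x * (b - x) \<le> \<tau> b"
    using S0plus_tangent_le[OF S x0] ab x by auto
  then have "(\<tau>' x - k) * (x - a) \<ge> 0" "(k - \<tau>' x) * (b - x) \<ge> 0"
    using ea eb tx by (simp_all add: algebra_simps)
  then have "\<tau>' x - k \<ge> 0" "k - \<tau>' x \<ge> 0" using x by (simp_all add: zero_le_mult_iff)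
  then show ?thesis by (simp add: k_def m_def)
qed

text \<open>Beyond \<open>b\<close>, concavity through two points of \<open>(a, b)\<close> bounds \<open>\<tau>'\<close> from above and
  monotonicity from below.\<close>

lemma S0plus_deriv_const_right:
  assumes S: "S0plus \<tau> \<tau>'" and ab: "0 \<le> a" "a < b"
    and const: "\<And>x. a < x \<Longrightarrow> x < b \<Longrightarrow> \<tau>' x = k"
    and t: "t > a"
  shows "\<tau>' t = k"
proof (cases "t < b")
  case True
  then show ?thesis using const t by auto
next
  case False
  define s1 where "s1 = a + (b - a) / 3"
  define s2 where "s2 = a + 2 * (b - a) / 3"
  have s: "a < s1" "s1 < s2" "s2 < b" using ab by (auto simp: s1_def s2_def field_simps)
  define \<theta> where "\<theta> = (s2 - s1) / (t - s1)"
  have \<theta>: "0 < \<theta>" "\<theta> \<le> 1" using s False by (auto simp: \<theta>_def field_simps)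
  have "(1 - \<theta>) * s1 + \<theta> * t = s1 + \<theta> * (t - s1)" by (simp add: algebra_simps)
  also have "\<dots> = s2" using s False by (simp add: \<theta>_def)
  finally have comb: "(1 - \<theta>) * s1 + \<theta> * t = s2" .
  have "concave_on {0<..} \<tau>'" using S by (simp add: S0plus_def)
  then have "(1 - \<theta>) * \<tau>' s1 + \<theta> * \<tau>' t \<le> \<tau>' ((1 - \<theta>) *\<^sub>R s1 + \<theta> *\<^sub>R t)"
    using \<theta> s ab False by (intro concave_onD) auto
  then have "(1 - \<theta>) * k + \<theta> * \<tau>' t \<le> k" using comb const s by simp
  then have "\<theta> * \<tau>' t \<le> \<theta> * k" by (simp add: algebra_simps)
  then have "\<tau>' t \<le> k" using \<theta> by simp
  moreover have "\<tau>' s1 \<le> \<tau>' t" using S0plus_deriv_mono[OF S, of s1 t] s ab False by auto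
  ultimately show ?thesis using const s by auto
qed

lemma rderiv_eq_0_if_const_right:
  assumes "\<And>y. y > x \<Longrightarrow> f y = f x"
  shows "rderiv f x = 0"
  unfolding rderiv_def
proof (rule tendsto_Lim)
  have "\<forall>\<^sub>F h in at_right (0::real). (f (x + h) - f x) / h = 0"
    using eventually_at_right_less[of 0] by eventually_elim (use assms in auto)
  then show "((\<lambda>h. (f (x + h) - f x) / h) \<longlongrightarrow> 0) (at_right 0)"
    by (rule tendsto_eventually)
qed simp

lemma flat_threshold_le:
  assumes "a \<ge> 0" and "\<And>x. x > a \<Longrightarrow> rderiv \<tau>' x = 0"
  shows "flat_threshold \<tau>' \<le> ereal a"
  unfolding flat_threshold_def
proof (subst Inf_le_iff, intro allI impI)
  fix y assume "ereal a < y"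
  then obtain z where z: "ereal a < ereal z" "ereal z < y" using ereal_dense2 by blast
  then have "z > a" by simp
  then have "z \<in> {x. x > 0 \<and> rderiv \<tau>' x = 0}" using assms by simp
  then show "\<exists>w\<in>ereal ` {x. x > 0 \<and> rderiv \<tau>' x = 0}. y > w" using z(2) by blast
qed

lemma S0plus_midpoint_less:
  assumes S: "S0plus \<tau> \<tau>'" and ab: "0 \<le> a" "a < b"
    and a: "ereal a < flat_threshold \<tau>'"
  shows "\<tau> ((a + b) / 2) < (\<tau> a + \<tau> b) / 2"
proof (rule ccontr)
  assume "\<not> ?thesis"
  then have eq: "(\<tau> a + \<tau> b) / 2 \<le> \<tau> ((a + b) / 2)" by simp
  have const: "\<tau>' t = \<tau>' ((a + b) / 2)" if "t > a" for t
    using S0plus_deriv_const_right[OF S ab S0plus_deriv_const_if_midpoint_eq[OF S ab eq]] that by blast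
  have "rderiv \<tau>' x = 0" if "x > a" for x
  proof (rule rderiv_eq_0_if_const_right)
    fix y assume "y > x"
    then show "\<tau>' y = \<tau>' x" using const[of x] const[of y] that by linarith
  qed
  then have "flat_threshold \<tau>' \<le> ereal a" using ab(1) by (rule flat_threshold_le[rotated])
  with a show False by simp
qed

text \<open>Pointwise inequality behind the uniqueness argument, for \<open>a = d(y,m)\<close>, \<open>b = d(y,q)\<close>,
  \<open>\<delta> = d(m,q)\<close> and \<open>e = d(y,c)\<close> with \<open>c\<close> the Hadamard point of \<open>m, q\<close>.\<close>

lemma S0plus_hadamard_midpoint:
  assumes S: "S0plus \<tau> \<tau>'" and "0 \<le> e" "0 \<le> a" "0 \<le> b" and \<delta>: "\<delta> > 0"
    and ab: "\<bar>a - b\<bar> \<le> \<delta>" and e: "e\<^sup>2 \<le> (1/2) * a\<^sup>2 + (1/2) * b\<^sup>2 - (1/4) * \<delta>\<^sup>2"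
  shows "\<tau> e \<le> (\<tau> a + \<tau> b) / 2"
    and "ereal a < flat_threshold \<tau>' \<Longrightarrow> \<tau> e < (\<tau> a + \<tau> b) / 2"
proof -
  have mono: "mono_on {0..} \<tau>" using S by (simp add: S0plus_def)
  have "(a - b)\<^sup>2 \<le> \<delta>\<^sup>2" using ab \<delta> by (metis abs_le_square_iff abs_of_pos)
  then have "e\<^sup>2 \<le> ((a + b) / 2)\<^sup>2" using e by (simp add: power2_eq_square field_simps)
  then have "e \<le> (a + b) / 2" by (rule power2_le_imp_le) (use assms in simp)
  then have le_mid: "\<tau> e \<le> \<tau> ((a + b) / 2)" using assms by (auto intro: mono_onD[OF mono])
  then show "\<tau> e \<le> (\<tau> a + \<tau> b) / 2" using S0plus_midpoint_le[OF S] assms by fastforce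
  assume a: "ereal a < flat_threshold \<tau>'"
  show "\<tau> e < (\<tau> a + \<tau> b) / 2"
  proof (cases a b rule: linorder_cases)
    case equal
    moreover have "\<delta>\<^sup>2 > 0" using \<delta> by simp
    moreover have "e\<^sup>2 \<le> a\<^sup>2 - \<delta>\<^sup>2 / 4" using e equal by simp
    ultimately have "e\<^sup>2 < a\<^sup>2" by linarith
    then have "e < a" using assms by (simp add: power_less_imp_less_base)
    then show ?thesis using S0plus_strict_mono[OF S] assms equal by simp
  next
    case less
    then show ?thesis using S0plus_midpoint_less[OF S _ less a] le_mid assms by simp
  next
    case greater
    then have "ereal b < ereal a" by simp
    then have "ereal b < flat_threshold \<tau>'" using a by (rule order.strict_trans)
    then show ?thesis using S0plus_midpoint_less[OF S _ greater] le_mid assms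
      by (simp add: add.commute)
  qed
qed

lemma S0plus_deriv_shift_le:
  assumes S: "S0plus \<tau> \<tau>'" and a: "a \<ge> 0" and D: "D \<ge> 0"
  shows "\<tau>' (a + D) \<le> (1 + D) * \<tau>' a + \<tau>' (2 + D)"
proof (cases "a \<ge> 2 \<and> D > 0")
  case False
  then consider "D = 0" | "0 < a + D" "a < 2" using a D by fastforce
  then show ?thesis
  proof cases
    case 2
    then have "\<tau>' (a + D) \<le> \<tau>' (2 + D)" using S0plus_deriv_mono[OF S] by simp
    then show ?thesis using S0plus_deriv_nonneg[OF S] a D by (smt (verit) mult_nonneg_nonneg)
  qed (use S0plus_deriv_nonneg[OF S] a in simp)
next
  case True
  text \<open>Concavity of \<open>\<tau>'\<close> on the chord from \<open>1\<close> to \<open>a + D\<close>, which passes through \<open>a\<close>.\<close>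
  define \<theta> where "\<theta> = (a - 1) / (a + D - 1)"
  have den: "a + D - 1 > 0" using True by simp
  have \<theta>: "0 \<le> \<theta>" "\<theta> \<le> 1" using True den by (auto simp: \<theta>_def field_simps)
  have "(1 - \<theta>) * 1 + \<theta> * (a + D) = 1 + \<theta> * (a + D - 1)" by (simp add: algebra_simps)
  also have "\<dots> = a" using den by (simp add: \<theta>_def)
  finally have comb: "(1 - \<theta>) * 1 + \<theta> * (a + D) = a" .
  have "concave_on {0<..} \<tau>'" using S by (simp add: S0plus_def)
  then have "(1 - \<theta>) * \<tau>' 1 + \<theta> * \<tau>' (a + D) \<le> \<tau>' ((1 - \<theta>) *\<^sub>R 1 + \<theta> *\<^sub>R (a + D))"
    using \<theta> True by (intro concave_onD) auto
  moreover have "(1 - \<theta>) * \<tau>' 1 \<ge> 0" using S \<theta> by (simp add: S0plus_def less_imp_le)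
  ultimately have chord: "\<theta> * \<tau>' (a + D) \<le> \<tau>' a" using comb by simp
  have "(1 + D) * \<theta> \<ge> 1" using den True by (simp add: \<theta>_def field_simps)
  moreover have "\<tau>' (a + D) > 0" using S True by (simp add: S0plus_def)
  ultimately have "\<tau>' (a + D) \<le> (1 + D) * (\<theta> * \<tau>' (a + D))" by (simp add: mult.assoc[symmetric])
  also have "\<dots> \<le> (1 + D) * \<tau>' a" using chord D by (intro mult_left_mono) auto
  finally show ?thesis using S0plus_deriv_nonneg[OF S, of "2 + D"] D by simp
qed

lemma S0plus_diff_bound:
  assumes S: "S0plus \<tau> \<tau>'" and a: "a \<ge> 0" and b: "b \<ge> 0" and ab: "\<bar>b - a\<bar> \<le> D"
  shows "\<bar>\<tau> b - \<tau> a\<bar> \<le> D * ((1 + D) * \<tau>' a + \<tau>' (2 + D))"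
proof -
  have D: "D \<ge> 0" using ab by simp
  have nonneg: "\<tau>' a \<ge> 0" "\<tau>' (2 + D) \<ge> 0" using S0plus_deriv_nonneg[OF S] a D by auto
  have \<tau>_0: "\<tau> 0 = 0" using S by (simp add: S0plus_def)
  have \<tau>_nonneg: "\<tau> x \<ge> 0" if "x \<ge> 0" for x
    using S that mono_onD[of "{0..}" \<tau> 0 x] by (simp add: S0plus_def)
  have "\<tau> b - \<tau> a \<le> D * \<tau>' (a + D)"
  proof (cases "b > 0")
    case True
    have "\<tau> b - \<tau> a \<le> \<tau>' b * (b - a)" using S0plus_tangent_le[OF S True a] by (simp add: algebra_simps)
    also have "\<dots> \<le> \<tau>' b * D" using S0plus_deriv_nonneg[OF S] b ab by (intro mult_left_mono) auto
    also have "\<dots> \<le> \<tau>' (a + D) * D" using S0plus_deriv_mono[OF S True] ab D by (intro mult_right_mono) auto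
    finally show ?thesis by (simp add: mult.commute)
  next
    case False
    then have "b = 0" using b by simp
    then show ?thesis
      using \<tau>_0 \<tau>_nonneg[OF a] mult_nonneg_nonneg[OF D S0plus_deriv_nonneg[OF S add_nonneg_nonneg[OF a D]]]
      by simp
  qed
  also have "\<dots> \<le> D * ((1 + D) * \<tau>' a + \<tau>' (2 + D))"
    using S0plus_deriv_shift_le[OF S a D] D by (intro mult_left_mono) auto
  finally have up: "\<tau> b - \<tau> a \<le> D * ((1 + D) * \<tau>' a + \<tau>' (2 + D))" .
  have "\<tau> a - \<tau> b \<le> D * \<tau>' a"
  proof (cases "a > 0")
    case True
    have "\<tau> a - \<tau> b \<le> \<tau>' a * (a - b)" using S0plus_tangent_le[OF S True b] by (simp add: algebra_simps)
    also have "\<dots> \<le> \<tau>' a * D" using nonneg ab by (intro mult_left_mono) auto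
    also have "\<dots> = D * \<tau>' a" by simp
    finally show ?thesis .
  next
    case False
    then have "a = 0" using a by simp
    then show ?thesis using \<tau>_0 \<tau>_nonneg[OF b] mult_nonneg_nonneg[OF D nonneg(1)] by simp
  qed
  also have "\<dots> \<le> D * ((1 + D) * \<tau>' a + \<tau>' (2 + D))"
  proof (rule mult_left_mono[OF _ D])
    show "\<tau>' a \<le> (1 + D) * \<tau>' a + \<tau>' (2 + D)"
      using nonneg mult_nonneg_nonneg[OF D nonneg(1)] by (simp add: distrib_right)
  qed
  finally show ?thesis using up by linarith
qed

lemma S0plus_comp_dist_measurable:
  fixes Y :: "'b \<Rightarrow> 'a::metric_space"
  assumes S: "S0plus \<tau> \<tau>'" and Y: "Y \<in> measurable M borel"
  shows "(\<lambda>\<omega>. \<tau> (dist (Y \<omega>) q)) \<in> borel_measurable M"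
proof -
  have mono: "mono_on {0..} \<tau>" using S by (simp add: S0plus_def)
  have max_mono: "mono (\<lambda>x. \<tau> (max 0 x))"
  proof (rule monoI)
    fix x y :: real assume "x \<le> y"
    then show "\<tau> (max 0 x) \<le> \<tau> (max 0 y)" by (intro mono_onD[OF mono]) auto
  qed
  have dist_meas: "(\<lambda>\<omega>. dist (Y \<omega>) q) \<in> borel_measurable M"
    by (rule borel_measurable_continuous_on[OF _ Y]) (intro continuous_intros)
  show ?thesis
    using measurable_comp[OF dist_meas borel_measurable_mono[OF max_mono]] by (simp add: comp_def)
qed

lemma S0plus_frechet_integrand_integrable:
  fixes Y :: "'b \<Rightarrow> 'a::metric_space"
  assumes S: "S0plus \<tau> \<tau>'" and Y: "Y \<in> measurable M borel" and "finite_measure M"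
    and I: "integrable M (\<lambda>\<omega>. \<tau>' (dist (Y \<omega>) ob))"
  shows "integrable M (\<lambda>\<omega>. \<tau> (dist (Y \<omega>) q) - \<tau> (dist (Y \<omega>) ob))"
proof (rule Bochner_Integration.integrable_bound)
  interpret finite_measure M by fact
  define D where "D = dist q ob"
  have D: "D \<ge> 0" by (simp add: D_def)
  show "integrable M (\<lambda>\<omega>. D * ((1 + D) * \<tau>' (dist (Y \<omega>) ob) + \<tau>' (2 + D)))"
    using I by (intro integrable_mult_right integrable_add) auto
  show "(\<lambda>\<omega>. \<tau> (dist (Y \<omega>) q) - \<tau> (dist (Y \<omega>) ob)) \<in> borel_measurable M"
    using S0plus_comp_dist_measurable[OF S Y] by (intro borel_measurable_diff)
  show "AE \<omega> in M. norm (\<tau> (dist (Y \<omega>) q) - \<tau> (dist (Y \<omega>) ob))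
          \<le> norm (D * ((1 + D) * \<tau>' (dist (Y \<omega>) ob) + \<tau>' (2 + D)))"
  proof (intro AE_I2)
    fix \<omega>
    have "\<bar>dist (Y \<omega>) q - dist (Y \<omega>) ob\<bar> \<le> D"
      using abs_dist_diff_le[of q "Y \<omega>" ob] by (simp add: D_def dist_commute)
    then have "\<bar>\<tau> (dist (Y \<omega>) q) - \<tau> (dist (Y \<omega>) ob)\<bar>
        \<le> D * ((1 + D) * \<tau>' (dist (Y \<omega>) ob) + \<tau>' (2 + D))"
      by (intro S0plus_diff_bound[OF S]) auto
    then show "norm (\<tau> (dist (Y \<omega>) q) - \<tau> (dist (Y \<omega>) ob))
          \<le> norm (D * ((1 + D) * \<tau>' (dist (Y \<omega>) ob) + \<tau>' (2 + D)))"
      by simp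
  qed
qed

lemma measure_eq_0_if_integral_eq_0:
  fixes h :: "'b \<Rightarrow> real"
  assumes "integrable M h" and "\<And>\<omega>. h \<omega> \<ge> 0" and "integral\<^sup>L M h = 0"
    and "\<And>\<omega>. \<omega> \<in> A \<Longrightarrow> h \<omega> > 0"
  shows "measure M A = 0"
proof (cases "A \<in> sets M")
  case True
  have "AE \<omega> in M. h \<omega> = 0" using assms integral_nonneg_eq_0_iff_AE by blast
  then have "AE \<omega> in M. \<omega> \<notin> A" by eventually_elim (use assms(4) in force)
  then have "A \<in> null_sets M" using True AE_iff_null_sets by blast
  then show ?thesis by (simp add: measure_def null_setsD1)
qed (simp add: measure_notin_sets)

lemma tau_frechet_mean_unique:
  fixes M :: "'b measure" and Y :: "'b \<Rightarrow> 'a::metric_space"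
  assumes H: "hadamard_space (UNIV :: 'a set)" and "finite_measure M"
    and Y: "Y \<in> measurable M borel" and S: "S0plus \<tau> \<tau>'"
    and I: "integrable M (\<lambda>\<omega>. \<tau>' (dist (Y \<omega>) ob))"
    and m: "tau_frechet_mean M Y \<tau> ob m" and q: "tau_frechet_mean M Y \<tau> ob q"
    and pos: "measure M {\<omega> \<in> space M. ereal (dist (Y \<omega>) m) < flat_threshold \<tau>'} > 0"
  shows "q = m"
proof (rule ccontr)
  assume "q \<noteq> m"
  then have \<delta>: "dist m q > 0" by simp
  obtain c where c: "\<And>z. (dist z c)\<^sup>2 \<le> (1/2) * (dist m z)\<^sup>2 + (1/2) * (dist q z)\<^sup>2 - (1/4) * (dist m q)\<^sup>2"
    using H unfolding hadamard_space_def by blast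
  define f where "f = (\<lambda>p \<omega>. \<tau> (dist (Y \<omega>) p) - \<tau> (dist (Y \<omega>) ob))"
  define h where "h = (\<lambda>\<omega>. (f m \<omega> + f q \<omega>) / 2 - f c \<omega>)"
  have f: "integrable M (f p)" for p
    unfolding f_def using S0plus_frechet_integrand_integrable[OF S Y assms(2) I] .
  have h_eq: "h \<omega> = (\<tau> (dist (Y \<omega>) m) + \<tau> (dist (Y \<omega>) q)) / 2 - \<tau> (dist (Y \<omega>) c)" for \<omega>
    by (simp add: h_def f_def field_simps)
  have "\<bar>dist (Y \<omega>) m - dist (Y \<omega>) q\<bar> \<le> dist m q"
    and "(dist (Y \<omega>) c)\<^sup>2 \<le> (1/2) * (dist (Y \<omega>) m)\<^sup>2 + (1/2) * (dist (Y \<omega>) q)\<^sup>2 - (1/4) * (dist m q)\<^sup>2"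
    for \<omega>
    using abs_dist_diff_le[of m "Y \<omega>" q] c[of "Y \<omega>"] by (simp_all add: dist_commute)
  note pointwise = S0plus_hadamard_midpoint[OF S _ _ _ \<delta> this]
  have h_nonneg: "h \<omega> \<ge> 0" for \<omega> using pointwise(1) h_eq by simp
  have "integral\<^sup>L M h = (integral\<^sup>L M (f m) + integral\<^sup>L M (f q)) / 2 - integral\<^sup>L M (f c)"
    unfolding h_def using f by simp
  moreover have "integral\<^sup>L M (f m) \<le> integral\<^sup>L M (f c)" "integral\<^sup>L M (f q) \<le> integral\<^sup>L M (f m)"
    using m q by (auto simp: tau_frechet_mean_def frechet_obj_def f_def)
  ultimately have "integral\<^sup>L M h \<le> 0" by simp
  moreover have "integral\<^sup>L M h \<ge> 0" using h_nonneg by (simp add: integral_nonneg)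
  ultimately have "integral\<^sup>L M h = 0" by simp
  moreover have "integrable M h" unfolding h_def using f by simp
  ultimately have "measure M {\<omega> \<in> space M. ereal (dist (Y \<omega>) m) < flat_threshold \<tau>'} = 0"
    using h_nonneg pointwise(2) h_eq by (intro measure_eq_0_if_integral_eq_0[of M h]) auto
  with pos show False by simp
qed

theorem mainTheorem7:
  fixes M :: "'b measure" and Y :: "'b \<Rightarrow> 'a::metric_space"
    and ob m :: 'a and \<tau> \<tau>' :: "real \<Rightarrow> real"
  assumes "hadamard_space (UNIV :: 'a set)"
    and "prob_space M"
    and "Y \<in> measurable M borel"
    and "S0plus \<tau> \<tau>'"
    and "integrable M (\<lambda>\<omega>. \<tau>' (dist (Y \<omega>) ob))"
    and "tau_frechet_mean M Y \<tau> ob m"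
  shows "(measure M {\<omega> \<in> space M. ereal (dist (Y \<omega>) m) < Inf (ereal ` {x. x > 0 \<and> rderiv \<tau>' x = 0})} > 0
            \<longrightarrow> (\<forall>q. tau_frechet_mean M Y \<tau> ob q \<longrightarrow> q = m))
       \<and> ((\<forall>x>0. rderiv \<tau>' x > 0)
            \<longrightarrow> (\<forall>q1 q2. tau_frechet_mean M Y \<tau> ob q1 \<longrightarrow> tau_frechet_mean M Y \<tau> ob q2 \<longrightarrow> q1 = q2))"
proof -
  interpret prob_space M by fact
  let ?A = "{\<omega> \<in> space M. ereal (dist (Y \<omega>) m) < flat_threshold \<tau>'}"
  have unique: "q = m" if "measure M ?A > 0" and "tau_frechet_mean M Y \<tau> ob q" for q
    using tau_frechet_mean_unique[OF assms(1) finite_measure_axioms assms(3-6) that(2,1)] .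
  have "measure M ?A > 0" if "\<forall>x>0. rderiv \<tau>' x > 0"
  proof -
    have empty: "{x. x > 0 \<and> rderiv \<tau>' x = 0} = {}" using that by force
    have "flat_threshold \<tau>' = \<infinity>" unfolding flat_threshold_def empty by (simp add: top_ereal_def)
    then have "?A = space M" by simp
    then show ?thesis by (simp add: prob_space)
  qed
  with unique show ?thesis unfolding flat_threshold_def by blast
qed

end
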